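(* Let $\mathsf{SafeInstance} \subseteq \mathbb{N}$ contain at least two elements. Then there is no metalanguage capturing the property $\psi(g)$: "$g$ halts on every input and outputs an element of $\mathsf{SafeInstance}$", i.e. $\psi(g) \leftrightarrow \forall x\,(\varphi_g(x)\downarrow \wedge \varphi_g(x) \in \mathsf{SafeInstance})$.
   Context: Programs (generators) are identified with natural numbers in a fixed universal programming language; $\varphi_g$ is the partial computable function computed by $g$ and $\varphi_g(x)\downarrow$ means $g$ halts on $x$. A metalanguage $L \subseteq \mathbb{N}$ captures a property $\psi$ if $L$ is decidable, every $g \in L$ satisfies $\psi$, and for every $g' \in \mathbb{N}$ satisfying $\psi$ there is $g \in L$ with $\varphi_g = \varphi_{g'}$. *)

theory Defs
  imports Main "HOL-Library.Nat_Bijection"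
begin

text \<open>A fixed universal programming language: unary partial recursive functions
on nat, with arguments/results paired via the Cantor pairing prod_encode.\<close>

datatype recf =
    Zero
  | Succ
  | Left
  | Right
  | Comp recf recf
  | Pair recf recf
  | Prec recf recf
  | Mu recf

inductive eval :: "recf \<Rightarrow> nat \<Rightarrow> nat \<Rightarrow> bool" where
  eval_Zero: "eval Zero x 0"
| eval_Succ: "eval Succ x (Suc x)"
| eval_Left: "eval Left x (fst (prod_decode x))"
| eval_Right: "eval Right x (snd (prod_decode x))"
| eval_Comp: "eval g x y \<Longrightarrow> eval f y z \<Longrightarrow> eval (Comp f g) x z"
| eval_Pair: "eval f x y \<Longrightarrow> eval g x z \<Longrightarrow> eval (Pair f g) x (prod_encode (y, z))"
| eval_Prec0: "eval f y z \<Longrightarrow> eval (Prec f g) (prod_encode (0, y)) z"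
| eval_PrecS: "eval (Prec f g) (prod_encode (n, y)) z \<Longrightarrow>
     eval g (prod_encode (prod_encode (n, y), z)) w \<Longrightarrow>
     eval (Prec f g) (prod_encode (Suc n, y)) w"
| eval_Mu: "eval f (prod_encode (n, x)) 0 \<Longrightarrow>
     (\<forall>i<n. \<exists>v. v \<noteq> 0 \<and> eval f (prod_encode (i, x)) v) \<Longrightarrow>
     eval (Mu f) x n"

lemma decode_fst_le: "fst (prod_decode m) \<le> m"
  by (metis le_prod_encode_1 prod.collapse prod_decode_inverse)
lemma decode_snd_le: "snd (prod_decode m) \<le> m"
  by (metis le_prod_encode_2 prod.collapse prod_decode_inverse)
function decode :: "nat \<Rightarrow> recf" where
  "decode n =
    (if n = 0 then Zero else if n = 1 then Succ else if n = 2 then Left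
     else if n = 3 then Right
     else (let t = fst (prod_decode (n - 4)); r = snd (prod_decode (n - 4));
               a = fst (prod_decode r); b = snd (prod_decode r)
           in if t mod 4 = 0 then Comp (decode a) (decode b)
              else if t mod 4 = 1 then Pair (decode a) (decode b)
              else if t mod 4 = 2 then Prec (decode a) (decode b)
              else Mu (decode r)))"
  by auto
termination
  apply (relation "measure id")
  apply simp_all
  using decode_fst_le decode_snd_le le_less_trans le_trans
  by (metis diff_less zero_less_numeral not_gr_zero)+

definition phi :: "nat \<Rightarrow> nat \<Rightarrow> nat option" where
  "phi g x = (if \<exists>v. eval (decode g) x v then Some (THE v. eval (decode g) x v) else None)"

definition halts :: "nat \<Rightarrow> nat \<Rightarrow> bool" where
  "halts g x \<longleftrightarrow> phi g x \<noteq> None"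

definition decidable :: "nat set \<Rightarrow> bool" where
  "decidable L \<longleftrightarrow> (\<exists>d. \<forall>x. phi d x = Some (if x \<in> L then 1 else 0))"

definition captures :: "nat set \<Rightarrow> (nat \<Rightarrow> bool) \<Rightarrow> bool" where
  "captures L \<psi> \<longleftrightarrow> decidable L \<and> (\<forall>g\<in>L. \<psi> g) \<and>
     (\<forall>g'. \<psi> g' \<longrightarrow> (\<exists>g\<in>L. phi g = phi g'))"

end

theory Submission
  imports Defs
begin

(* Suppose L captured the property, and let a \<noteq> b be safe. Every program in L is total and L is
   decidable, so with a universal program one can write a total program h that outputs a on
   x \<notin> L and, on x \<in> L, the element of {a, b} different from \<phi>\<^sub>x(x). Then h has the
   property, hence \<phi>\<^sub>h = \<phi>\<^sub>g for some g \<in> L, and h and g disagree at g. Most of the work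
   is the universal program: a stack machine for recf whose transition function is primitive
   recursive on the Cantor-encoded state, iterated by Prec and stopped by Mu at the first
   halting state. *)

section \<open>Determinism\<close>

declare decode.simps [simp del]

inductive_cases eval_CompE: "eval (Comp f g) x v"
inductive_cases eval_PairE: "eval (Pair f g) x v"
inductive_cases eval_PrecE: "eval (Prec f g) x v"
inductive_cases eval_MuE: "eval (Mu f) x v"

lemma eval_det: "eval f x v \<Longrightarrow> eval f x w \<Longrightarrow> v = w"
proof (induction arbitrary: w rule: eval.induct)
  case (eval_Comp g x y f z)
  from eval_Comp.prems show ?case
    by (rule eval_CompE) (use eval_Comp.IH in metis)
next
  case (eval_Pair f x y g z)
  from eval_Pair.prems show ?case
    by (rule eval_PairE) (use eval_Pair.IH in metis)
next
  case (eval_Prec0 f y z g)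
  from eval_Prec0.prems show ?case
    by (rule eval_PrecE) (use eval_Prec0.IH in auto)
next
  case (eval_PrecS f g n y z w')
  from eval_PrecS.prems show ?case
    by (rule eval_PrecE) (use eval_PrecS.IH in auto)
next
  case (eval_Mu f n x)
  from eval_Mu.prems obtain m where m: "w = m" "eval f (prod_encode (m, x)) 0"
    "\<forall>i<m. \<exists>v. v \<noteq> 0 \<and> eval f (prod_encode (i, x)) v"
    by (rule eval_MuE) blast
  show ?case
  proof (rule linorder_cases[of n m])
    assume "n < m"
    then show ?thesis using m eval_Mu.IH(1) by blast
  next
    assume "m < n"
    then show ?thesis using m eval_Mu.IH(2) by blast
  qed (use m in blast)
qed (auto elim: eval.cases)

lemma phi_eq_Some_iff: "phi g x = Some v \<longleftrightarrow> eval (decode g) x v"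
proof -
  have "(THE v. eval (decode g) x v) = v" if "eval (decode g) x v" for v
    using that eval_det by blast
  then show ?thesis unfolding phi_def by auto
qed

section \<open>Total computable functions\<close>

definition computable :: "(nat \<Rightarrow> nat) \<Rightarrow> bool" where
  "computable f \<longleftrightarrow> (\<exists>r. \<forall>x. eval r x (f x))"

fun const_prog :: "nat \<Rightarrow> recf" where
  "const_prog 0 = Zero"
| "const_prog (Suc n) = Comp Succ (const_prog n)"

lemma eval_const_prog: "eval (const_prog c) x c"
  by (induction c) (auto intro: eval.intros)

lemma eval_id_prog: "eval (Pair Left Right) x x"
  using eval_Pair[OF eval_Left eval_Right, of x] by simp

lemma computable_const: "computable (\<lambda>x. c)"
  unfolding computable_def using eval_const_prog by blast

lemma computable_id: "computable (\<lambda>x. x)"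
  unfolding computable_def using eval_id_prog by blast

lemma computable_comp: "computable f \<Longrightarrow> computable g \<Longrightarrow> computable (\<lambda>x. f (g x))"
  unfolding computable_def by (blast intro: eval.intros)

lemma computable_Suc: "computable f \<Longrightarrow> computable (\<lambda>x. Suc (f x))"
  unfolding computable_def by (blast intro: eval.intros)

lemma computable_fst_decode: "computable f \<Longrightarrow> computable (\<lambda>x. fst (prod_decode (f x)))"
  unfolding computable_def by (blast intro: eval.intros)

lemma computable_snd_decode: "computable f \<Longrightarrow> computable (\<lambda>x. snd (prod_decode (f x)))"
  unfolding computable_def by (blast intro: eval.intros)

lemma computable_prod_encode:
  "computable f \<Longrightarrow> computable g \<Longrightarrow> computable (\<lambda>x. prod_encode (f x, g x))"
  unfolding computable_def by (blast intro: eval.intros)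

lemma computable_apply2:
  assumes "computable (\<lambda>p. h (fst (prod_decode p)) (snd (prod_decode p)))"
    and "computable f" and "computable g"
  shows "computable (\<lambda>x. h (f x) (g x))"
  using computable_comp[OF assms(1) computable_prod_encode[OF assms(2,3)]] by simp

fun prim_rec :: "(nat \<Rightarrow> nat) \<Rightarrow> (nat \<Rightarrow> nat) \<Rightarrow> nat \<Rightarrow> nat \<Rightarrow> nat" where
  "prim_rec b s 0 y = b y"
| "prim_rec b s (Suc n) y = s (prod_encode (prod_encode (n, y), prim_rec b s n y))"

lemma computable_prim_rec:
  assumes "computable b" and "computable s"
  shows "computable (\<lambda>p. prim_rec b s (fst (prod_decode p)) (snd (prod_decode p)))"
proof -
  obtain rb rs where rb: "\<And>x. eval rb x (b x)" and rs: "\<And>x. eval rs x (s x)"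
    using assms unfolding computable_def by blast
  have "eval (Prec rb rs) (prod_encode (n, y)) (prim_rec b s n y)" for n y
    by (induction n) (auto intro: eval.intros rb rs)
  from this[of "fst (prod_decode p)" "snd (prod_decode p)" for p] show ?thesis
    unfolding computable_def by (metis prod.collapse prod_decode_inverse)
qed

lemma computable_funpow:
  assumes "computable s" and "computable b"
  shows "computable (\<lambda>p. (s ^^ fst (prod_decode p)) (b (snd (prod_decode p))))"
proof -
  have "prim_rec b (\<lambda>q. s (snd (prod_decode q))) n y = (s ^^ n) (b y)" for n y
    by (induction n) auto
  with computable_prim_rec[OF assms(2) computable_comp[OF assms(1) computable_snd_decode[OF computable_id]]]
  show ?thesis by simp
qed

lemma computable_pred: "computable f \<Longrightarrow> computable (\<lambda>x. f x - 1)"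
proof -
  have "prim_rec (\<lambda>_. 0) (\<lambda>q. fst (prod_decode (fst (prod_decode q)))) n y = n - 1" for n y
    by (cases n) auto
  moreover have "computable (\<lambda>p. prim_rec (\<lambda>_. 0) (\<lambda>q. fst (prod_decode (fst (prod_decode q))))
      (fst (prod_decode p)) (snd (prod_decode p)))"
    by (intro computable_prim_rec computable_const computable_fst_decode computable_id)
  ultimately have "computable (\<lambda>p. fst (prod_decode p) - 1)" by simp
  then show "computable f \<Longrightarrow> computable (\<lambda>x. f x - 1)"
    using computable_apply2[where h = "\<lambda>n y. n - 1"] computable_const by blast
qed

lemma computable_minus: "computable f \<Longrightarrow> computable g \<Longrightarrow> computable (\<lambda>x. f x - g x)"
proof -
  have "prim_rec (\<lambda>y. y) (\<lambda>q. snd (prod_decode q) - 1) n y = y - n" for n y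
    by (induction n) auto
  moreover have "computable (\<lambda>p. prim_rec (\<lambda>y. y) (\<lambda>q. snd (prod_decode q) - 1)
      (fst (prod_decode p)) (snd (prod_decode p)))"
    by (intro computable_prim_rec computable_id computable_pred computable_snd_decode)
  ultimately have "computable (\<lambda>p. snd (prod_decode p) - fst (prod_decode p))" by simp
  then show "computable f \<Longrightarrow> computable g \<Longrightarrow> computable (\<lambda>x. f x - g x)"
    using computable_apply2[where h = "\<lambda>n y. y - n"] by blast
qed

lemma computable_plus: "computable f \<Longrightarrow> computable g \<Longrightarrow> computable (\<lambda>x. f x + g x)"
proof -
  have "prim_rec (\<lambda>y. y) (\<lambda>q. Suc (snd (prod_decode q))) n y = y + n" for n y
    by (induction n) auto
  moreover have "computable (\<lambda>p. prim_rec (\<lambda>y. y) (\<lambda>q. Suc (snd (prod_decode q)))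
      (fst (prod_decode p)) (snd (prod_decode p)))"
    by (intro computable_prim_rec computable_id computable_Suc computable_snd_decode)
  ultimately have "computable (\<lambda>p. snd (prod_decode p) + fst (prod_decode p))" by simp
  then show "computable f \<Longrightarrow> computable g \<Longrightarrow> computable (\<lambda>x. f x + g x)"
    using computable_apply2[where h = "\<lambda>n y. y + n"] by blast
qed

lemma computable_If_zero:
  assumes "computable c" and "computable f" and "computable g"
  shows "computable (\<lambda>x. if c x = 0 then f x else g x)"
proof -
  let ?sel = "\<lambda>n y. if n = 0 then fst (prod_decode y) else snd (prod_decode y)"
  have "prim_rec (\<lambda>y. fst (prod_decode y))
      (\<lambda>q. snd (prod_decode (snd (prod_decode (fst (prod_decode q)))))) n y = ?sel n y" for n y
    by (cases n) auto
  moreover have "computable (\<lambda>p. prim_rec (\<lambda>y. fst (prod_decode y))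
      (\<lambda>q. snd (prod_decode (snd (prod_decode (fst (prod_decode q))))))
      (fst (prod_decode p)) (snd (prod_decode p)))"
    by (intro computable_prim_rec computable_id computable_snd_decode computable_fst_decode)
  ultimately have "computable (\<lambda>p. ?sel (fst (prod_decode p)) (snd (prod_decode p)))" by simp
  from computable_apply2[OF this assms(1) computable_prod_encode[OF assms(2,3)]] show ?thesis
    by (simp only: prod_encode_inverse prod.sel)
qed

lemma computable_If_eq:
  assumes "computable c" and "computable d" and "computable f" and "computable g"
  shows "computable (\<lambda>x. if c x = d x then f x else g x)"
proof -
  have "computable (\<lambda>x. if (c x - d x) + (d x - c x) = 0 then f x else g x)"
    by (intro computable_If_zero computable_plus computable_minus assms)
  moreover have "(c x - d x) + (d x - c x) = 0 \<longleftrightarrow> c x = d x" for x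
    by auto
  ultimately show ?thesis by simp
qed

lemma computable_mod4: "computable f \<Longrightarrow> computable (\<lambda>x. f x mod 4)"
proof -
  let ?s = "\<lambda>q. if snd (prod_decode q) = 3 then 0 else Suc (snd (prod_decode q))"
  have "prim_rec (\<lambda>_. 0) ?s n y = n mod 4" for n y
    by (induction n) (auto simp: mod_Suc)
  moreover have "computable (\<lambda>p. prim_rec (\<lambda>_. 0) ?s (fst (prod_decode p)) (snd (prod_decode p)))"
    by (intro computable_prim_rec computable_const computable_If_eq computable_snd_decode
        computable_id computable_Suc)
  ultimately have "computable (\<lambda>p. fst (prod_decode p) mod 4)" by simp
  then show "computable f \<Longrightarrow> computable (\<lambda>x. f x mod 4)"
    using computable_apply2[where h = "\<lambda>n y. n mod 4"] computable_const by blast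
qed

lemmas computable_intros = computable_const computable_id computable_Suc computable_fst_decode
  computable_snd_decode computable_prod_encode computable_plus computable_minus
  computable_If_eq computable_mod4

section \<open>A stack machine\<close>

definition code_tag :: "nat \<Rightarrow> nat" where
  "code_tag e = fst (prod_decode (e - 4))"

definition code_body :: "nat \<Rightarrow> nat" where
  "code_body e = snd (prod_decode (e - 4))"

definition code_left :: "nat \<Rightarrow> nat" where
  "code_left e = fst (prod_decode (code_body e))"

definition code_right :: "nat \<Rightarrow> nat" where
  "code_right e = snd (prod_decode (code_body e))"

lemma decode_unfold: "decode e =
  (if e = 0 then Zero else if e = 1 then Succ else if e = 2 then Left else if e = 3 then Right
   else if code_tag e mod 4 = 0 then Comp (decode (code_left e)) (decode (code_right e))
   else if code_tag e mod 4 = 1 then Pair (decode (code_left e)) (decode (code_right e))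
   else if code_tag e mod 4 = 2 then Prec (decode (code_left e)) (decode (code_right e))
   else Mu (decode (code_body e)))"
  by (subst decode.simps)
    (simp add: Let_def code_tag_def code_body_def code_left_def code_right_def)

lemma
  shows decode_ZeroD: "decode e = Zero \<Longrightarrow> e = 0"
    and decode_SuccD: "decode e = Succ \<Longrightarrow> e = 1"
    and decode_LeftD: "decode e = Left \<Longrightarrow> e = 2"
    and decode_RightD: "decode e = Right \<Longrightarrow> e = 3"
    and decode_CompD: "decode e = Comp f g \<Longrightarrow>
      4 \<le> e \<and> code_tag e mod 4 = 0 \<and> decode (code_left e) = f \<and> decode (code_right e) = g"
    and decode_PairD: "decode e = Pair f g \<Longrightarrow>
      4 \<le> e \<and> code_tag e mod 4 = 1 \<and> decode (code_left e) = f \<and> decode (code_right e) = g"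
    and decode_PrecD: "decode e = Prec f g \<Longrightarrow>
      4 \<le> e \<and> code_tag e mod 4 = 2 \<and> decode (code_left e) = f \<and> decode (code_right e) = g"
    and decode_MuD: "decode e = Mu f \<Longrightarrow>
      4 \<le> e \<and> code_tag e mod 4 = 3 \<and> decode (code_body e) = f"
  by (subst (asm) decode_unfold; auto split: if_splits)+

fun encode :: "recf \<Rightarrow> nat" where
  "encode Zero = 0"
| "encode Succ = 1"
| "encode Left = 2"
| "encode Right = 3"
| "encode (Comp f g) = 4 + prod_encode (0, prod_encode (encode f, encode g))"
| "encode (Pair f g) = 4 + prod_encode (1, prod_encode (encode f, encode g))"
| "encode (Prec f g) = 4 + prod_encode (2, prod_encode (encode f, encode g))"
| "encode (Mu f) = 4 + prod_encode (3, encode f)"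

lemma decode_encode: "decode (encode r) = r"
  by (induction r) (subst decode_unfold;
      simp add: code_tag_def code_body_def code_left_def code_right_def)+

(* A machine state is Call e x K (run program e on x) or Ret v K (value v was computed);
   the stack K is 0 when empty, push fr K otherwise. The frame tag records what remains to be
   done with a returned value: 0 apply the outer program of a Comp; 1 evaluate the second
   component of a Pair; 2 pair it with the first component; 3 feed it to the step program of
   a Prec; 4 test it in the search loop of a Mu. *)
definition Call :: "nat \<Rightarrow> nat \<Rightarrow> nat \<Rightarrow> nat" where
  "Call e x K = prod_encode (0, prod_encode (e, prod_encode (x, K)))"

definition Ret :: "nat \<Rightarrow> nat \<Rightarrow> nat" where
  "Ret v K = prod_encode (1, prod_encode (v, K))"

definition push :: "nat \<Rightarrow> nat \<Rightarrow> nat" where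
  "push fr K = Suc (prod_encode (fr, K))"

definition search_stack :: "nat \<Rightarrow> nat \<Rightarrow> nat \<Rightarrow> nat \<Rightarrow> nat" where
  "search_stack e i x K = push (prod_encode (4, prod_encode (e, prod_encode (i, x)))) K"

definition call_step :: "nat \<Rightarrow> nat \<Rightarrow> nat \<Rightarrow> nat" where
  "call_step e x K =
    (if e = 0 then Ret 0 K
     else if e = 1 then Ret (Suc x) K
     else if e = 2 then Ret (fst (prod_decode x)) K
     else if e = 3 then Ret (snd (prod_decode x)) K
     else if code_tag e mod 4 = 0 then Call (code_right e) x (push (prod_encode (0, code_left e)) K)
     else if code_tag e mod 4 = 1 then
       Call (code_left e) x (push (prod_encode (1, prod_encode (code_right e, x))) K)
     else if code_tag e mod 4 = 2 then
       (let n = fst (prod_decode x); y = snd (prod_decode x) in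
        if n = 0 then Call (code_left e) y K
        else Call e (prod_encode (n - 1, y))
               (push (prod_encode (3, prod_encode (e, prod_encode (n - 1, y)))) K))
     else Call (code_body e) (prod_encode (0, x)) (search_stack e 0 x K))"

definition return_step :: "nat \<Rightarrow> nat \<Rightarrow> nat \<Rightarrow> nat" where
  "return_step v fr K =
    (let tag = fst (prod_decode fr); d = snd (prod_decode fr) in
     if tag = 0 then Call d v K
     else if tag = 1 then
       Call (fst (prod_decode d)) (snd (prod_decode d)) (push (prod_encode (2, v)) K)
     else if tag = 2 then Ret (prod_encode (d, v)) K
     else if tag = 3 then Call (code_right (fst (prod_decode d))) (prod_encode (snd (prod_decode d), v)) K
     else
       (let e = fst (prod_decode d); i = fst (prod_decode (snd (prod_decode d)));
            x = snd (prod_decode (snd (prod_decode d))) in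
        if v = 0 then Ret i K
        else Call (code_body e) (prod_encode (Suc i, x)) (search_stack e (Suc i) x K)))"

definition step :: "nat \<Rightarrow> nat" where
  "step s =
    (let d = snd (prod_decode s) in
     if fst (prod_decode s) = 0
     then call_step (fst (prod_decode d)) (fst (prod_decode (snd (prod_decode d))))
            (snd (prod_decode (snd (prod_decode d))))
     else if snd (prod_decode d) = 0 then s
     else return_step (fst (prod_decode d)) (fst (prod_decode (snd (prod_decode d) - 1)))
            (snd (prod_decode (snd (prod_decode d) - 1))))"

lemma computable_step: "computable step"
  unfolding step_def call_step_def return_step_def Let_def Call_def Ret_def push_def
    search_stack_def code_tag_def code_body_def code_left_def code_right_def
  by (intro computable_intros)

lemma step_Call: "step (Call e x K) = call_step e x K"
  by (simp add: step_def Call_def)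

lemma step_Ret_push: "step (Ret v (push fr K)) = return_step v fr K"
  by (simp add: step_def Ret_def push_def)

lemma step_Ret_empty: "step (Ret v 0) = Ret v 0"
  by (simp add: step_def Ret_def)

definition reach :: "nat \<Rightarrow> nat \<Rightarrow> bool" where
  "reach s t \<longleftrightarrow> (\<exists>n. (step ^^ n) s = t)"

lemma reach_refl: "reach s s"
  unfolding reach_def by (metis funpow_0)

lemma reach_trans [trans]: "reach s t \<Longrightarrow> reach t u \<Longrightarrow> reach s u"
  unfolding reach_def by (metis funpow_add comp_apply)

lemma reach_stepI: "step s = t \<Longrightarrow> reach s t"
  unfolding reach_def by (metis funpow_Suc_right funpow_0 comp_apply)

lemma reach_search:
  assumes "\<forall>i<n. \<exists>v. v \<noteq> 0 \<and>
    reach (Call (code_body e) (prod_encode (i, x)) (search_stack e i x K)) (Ret v (search_stack e i x K))"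
  shows "reach (Call (code_body e) (prod_encode (0, x)) (search_stack e 0 x K))
    (Call (code_body e) (prod_encode (n, x)) (search_stack e n x K))"
  using assms
proof (induction n)
  case 0
  show ?case by (rule reach_refl)
next
  case (Suc n)
  then obtain v where "v \<noteq> 0"
    and v: "reach (Call (code_body e) (prod_encode (n, x)) (search_stack e n x K)) (Ret v (search_stack e n x K))"
    by blast
  have "reach (Call (code_body e) (prod_encode (0, x)) (search_stack e 0 x K))
      (Call (code_body e) (prod_encode (n, x)) (search_stack e n x K))"
    using Suc by simp
  also note v
  also have "reach (Ret v (search_stack e n x K))
      (Call (code_body e) (prod_encode (Suc n, x)) (search_stack e (Suc n) x K))"
    using \<open>v \<noteq> 0\<close> by (intro reach_stepI) (simp add: search_stack_def step_Ret_push return_step_def)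
  finally show ?case .
qed

lemma reach_eval:
  assumes "eval f x v" and "decode e = f"
  shows "reach (Call e x K) (Ret v K)"
  using assms
proof (induction arbitrary: e K rule: eval.induct)
  case (eval_Comp g x y f z)
  note e = decode_CompD[OF eval_Comp.prems]
  let ?K = "push (prod_encode (0, code_left e)) K"
  have "reach (Call e x K) (Call (code_right e) x ?K)"
    using e by (intro reach_stepI) (simp add: step_Call call_step_def)
  also have "reach \<dots> (Ret y ?K)" using eval_Comp.IH(1) e by blast
  also have "reach \<dots> (Call (code_left e) y K)"
    by (intro reach_stepI) (simp add: step_Ret_push return_step_def)
  also have "reach \<dots> (Ret z K)" using eval_Comp.IH(2) e by blast
  finally show ?case .
next
  case (eval_Pair f x y g z)
  note e = decode_PairD[OF eval_Pair.prems]
  let ?K1 = "push (prod_encode (1, prod_encode (code_right e, x))) K"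
  let ?K2 = "push (prod_encode (2, y)) K"
  have "reach (Call e x K) (Call (code_left e) x ?K1)"
    using e by (intro reach_stepI) (simp add: step_Call call_step_def)
  also have "reach \<dots> (Ret y ?K1)" using eval_Pair.IH(1) e by blast
  also have "reach \<dots> (Call (code_right e) x ?K2)"
    by (intro reach_stepI) (simp add: step_Ret_push return_step_def)
  also have "reach \<dots> (Ret z ?K2)" using eval_Pair.IH(2) e by blast
  also have "reach \<dots> (Ret (prod_encode (y, z)) K)"
    by (intro reach_stepI) (simp add: step_Ret_push return_step_def)
  finally show ?case .
next
  case (eval_Prec0 f y z g)
  note e = decode_PrecD[OF eval_Prec0.prems]
  have "reach (Call e (prod_encode (0, y)) K) (Call (code_left e) y K)"
    using e by (intro reach_stepI) (simp add: step_Call call_step_def)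
  also have "reach \<dots> (Ret z K)" using eval_Prec0.IH e by blast
  finally show ?case .
next
  case (eval_PrecS f g n y z w)
  note e = decode_PrecD[OF eval_PrecS.prems]
  let ?K = "push (prod_encode (3, prod_encode (e, prod_encode (n, y)))) K"
  have "reach (Call e (prod_encode (Suc n, y)) K) (Call e (prod_encode (n, y)) ?K)"
    using e by (intro reach_stepI) (simp add: step_Call call_step_def)
  also have "reach \<dots> (Ret z ?K)" using eval_PrecS.IH(1) eval_PrecS.prems by blast
  also have "reach \<dots> (Call (code_right e) (prod_encode (prod_encode (n, y), z)) K)"
    by (intro reach_stepI) (simp add: step_Ret_push return_step_def)
  also have "reach \<dots> (Ret w K)" using eval_PrecS.IH(2) e by blast
  finally show ?case .
next
  case (eval_Mu f n x)
  note e = decode_MuD[OF eval_Mu.prems]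
  have "reach (Call e x K) (Call (code_body e) (prod_encode (0, x)) (search_stack e 0 x K))"
    using e by (intro reach_stepI) (simp add: step_Call call_step_def)
  also have "reach \<dots> (Call (code_body e) (prod_encode (n, x)) (search_stack e n x K))"
    using eval_Mu.IH(2) e by (intro reach_search) blast
  also have "reach \<dots> (Ret 0 (search_stack e n x K))" using eval_Mu.IH(1) e by blast
  also have "reach \<dots> (Ret n K)"
    by (intro reach_stepI) (simp add: search_stack_def step_Ret_push return_step_def)
  finally show ?case .
qed (auto dest!: decode_ZeroD decode_SuccD decode_LeftD decode_RightD
      intro!: reach_stepI simp: step_Call call_step_def)

section \<open>A universal program\<close>

definition halted :: "nat \<Rightarrow> bool" where
  "halted s \<longleftrightarrow> (\<exists>v. s = Ret v 0)"

definition result :: "nat \<Rightarrow> nat" where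
  "result s = fst (prod_decode (snd (prod_decode s)))"

lemma result_Ret [simp]: "result (Ret v K) = v"
  by (simp add: result_def Ret_def)

lemma halted_Ret [simp]: "halted (Ret v 0)"
  unfolding halted_def by blast

lemma funpow_step_halted: "halted s \<Longrightarrow> (step ^^ n) s = s"
  by (induction n) (auto simp: halted_def step_Ret_empty)

lemma halted_iff: "halted s \<longleftrightarrow> fst (prod_decode s) = 1 \<and> snd (prod_decode (snd (prod_decode s))) = 0"
proof
  assume "fst (prod_decode s) = 1 \<and> snd (prod_decode (snd (prod_decode s))) = 0"
  moreover have "s = prod_encode (fst (prod_decode s), snd (prod_decode s))" by simp
  moreover have "snd (prod_decode s) = prod_encode (fst (prod_decode (snd (prod_decode s))),
      snd (prod_decode (snd (prod_decode s))))" by simp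
  ultimately have "s = Ret (fst (prod_decode (snd (prod_decode s)))) 0"
    unfolding Ret_def by simp
  then show "halted s" unfolding halted_def by blast
qed (auto simp: halted_def Ret_def)

lemma computable_halted: "computable (\<lambda>s. if halted s then 0 else 1)"
proof -
  have "computable (\<lambda>s. if fst (prod_decode s) = 1 then
      if snd (prod_decode (snd (prod_decode s))) = 0 then 0 else 1 else 1)"
    by (intro computable_intros)
  moreover have "(\<lambda>s. if halted s then 0 else 1) = (\<lambda>s. if fst (prod_decode s) = 1 then
      if snd (prod_decode (snd (prod_decode s))) = 0 then 0 else 1 else (1::nat))"
    by (auto simp: halted_iff fun_eq_iff)
  ultimately show ?thesis by simp
qed

lemma Least_halted:
  assumes "(step ^^ n) s = Ret v 0"
  shows "(step ^^ (LEAST k. halted ((step ^^ k) s))) s = Ret v 0"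
proof -
  let ?m = "LEAST k. halted ((step ^^ k) s)"
  have "halted ((step ^^ n) s)" using assms by simp
  then have "?m \<le> n" and "halted ((step ^^ ?m) s)" by (auto intro: Least_le LeastI)
  then have "(step ^^ n) s = (step ^^ (n - ?m)) ((step ^^ ?m) s)"
    using funpow_add[of "n - ?m" ?m step] by simp
  also have "\<dots> = (step ^^ ?m) s"
    using \<open>halted ((step ^^ ?m) s)\<close> by (rule funpow_step_halted)
  finally have "(step ^^ n) s = (step ^^ ?m) s" .
  with assms show ?thesis by simp
qed

lemma eval_Mu_Least:
  assumes "\<And>k. P k \<Longrightarrow> eval F (prod_encode (k, x)) 0"
    and "\<And>k. \<not> P k \<Longrightarrow> \<exists>v. v \<noteq> 0 \<and> eval F (prod_encode (k, x)) v"
    and "P n"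
  shows "eval (Mu F) x (LEAST k. P k)"
  using assms by (intro eval_Mu) (auto intro: LeastI dest: not_less_Least)

lemma universal_program: "\<exists>U. \<forall>e y v. eval (decode e) y v \<longrightarrow> eval U (prod_encode (e, y)) v"
proof -
  define run where "run q = (step ^^ fst (prod_decode q))
    (Call (fst (prod_decode (snd (prod_decode q)))) (snd (prod_decode (snd (prod_decode q)))) 0)" for q
  have "computable run"
    unfolding run_def Call_def by (intro computable_funpow computable_step computable_intros)
  then have "computable (\<lambda>q. if halted (run q) then 0 else 1)" "computable (\<lambda>q. result (run q))"
    using computable_comp computable_halted unfolding result_def
    by (blast intro: computable_intros)+
  then obtain H Out where H: "\<And>q. eval H q (if halted (run q) then 0 else 1)"
    and Out: "\<And>q. eval Out q (result (run q))"
    unfolding computable_def by blast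
  have "eval (Comp Out (Pair (Mu H) (Pair Left Right))) (prod_encode (e, y)) v"
    if ev: "eval (decode e) y v" for e y v
  proof -
    let ?p = "prod_encode (e, y)"
    obtain n where "(step ^^ n) (Call e y 0) = Ret v 0"
      using reach_eval[OF ev refl, of 0] unfolding reach_def by blast
    then have run_n: "run (prod_encode (n, ?p)) = Ret v 0"
      and run_Least: "run (prod_encode (LEAST k. halted (run (prod_encode (k, ?p))), ?p)) = Ret v 0"
      using Least_halted by (simp_all add: run_def)
    have "eval (Mu H) ?p (LEAST k. halted (run (prod_encode (k, ?p))))"
    proof (rule eval_Mu_Least)
      fix k
      show "halted (run (prod_encode (k, ?p))) \<Longrightarrow> eval H (prod_encode (k, ?p)) 0"
        using H[of "prod_encode (k, ?p)"] by simp
      show "\<not> halted (run (prod_encode (k, ?p))) \<Longrightarrow> \<exists>w. w \<noteq> 0 \<and> eval H (prod_encode (k, ?p)) w"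
        using H[of "prod_encode (k, ?p)"] by force
    next
      show "halted (run (prod_encode (n, ?p)))" using run_n by simp
    qed
    moreover have "eval Out (prod_encode (LEAST k. halted (run (prod_encode (k, ?p))), ?p)) v"
      using Out[of "prod_encode (LEAST k. halted (run (prod_encode (k, ?p))), ?p)"] run_Least
      by simp
    ultimately show ?thesis by (blast intro: eval_Comp eval_Pair eval_id_prog)
  qed
  then show ?thesis by blast
qed

section \<open>Diagonalisation\<close>

lemma diagonal_program:
  assumes "decidable L" and total: "\<And>g. g \<in> L \<Longrightarrow> halts g g" and "computable f"
  shows "\<exists>h. \<forall>x. phi h x = Some (if x \<in> L then f (the (phi x x)) else c)"
proof -
  obtain d where d: "\<And>x. eval (decode d) x (if x \<in> L then 1 else 0)"
    using assms(1) by (auto simp: decidable_def phi_eq_Some_iff)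
  obtain U where U: "\<And>e y v. eval (decode e) y v \<Longrightarrow> eval U (prod_encode (e, y)) v"
    using universal_program by blast
  obtain F where F: "\<And>v. eval F v (f v)"
    using assms(3) unfolding computable_def by blast
  define Diag where "Diag = Comp F (Comp U (Pair (Comp Right Left) (Comp Right Left)))"
  \<comment> \<open>Primitive recursion on the decision bit is a lazy conditional: the interpreter is only
    started for \<open>x \<in> L\<close>, where \<open>phi x x\<close> is defined.\<close>
  define H where "H = Comp (Prec (const_prog c) Diag) (Pair (decode d) (Pair Left Right))"
  have "eval H x (if x \<in> L then f (the (phi x x)) else c)" for x
  proof (cases "x \<in> L")
    case True
    then obtain v where v: "phi x x = Some v"
      using total unfolding halts_def by blast
    then have "eval (decode x) x v" by (simp add: phi_eq_Some_iff)
    have "eval (Comp Right Left) (prod_encode (prod_encode (0, x), c)) x"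
      using eval_Comp[OF eval_Left eval_Right, of "prod_encode (prod_encode (0, x), c)"] by simp
    then have "eval Diag (prod_encode (prod_encode (0, x), c)) (f v)"
      unfolding Diag_def by (blast intro: eval_Comp eval_Pair U[OF \<open>eval (decode x) x v\<close>] F)
    then have "eval (Prec (const_prog c) Diag) (prod_encode (1, x)) (f v)"
      using eval_PrecS[OF eval_Prec0[OF eval_const_prog]] by simp
    moreover have "eval (Pair (decode d) (Pair Left Right)) x (prod_encode (1, x))"
      using eval_Pair[OF d eval_id_prog, of x] True by simp
    ultimately show ?thesis
      unfolding H_def using True v by (auto intro: eval_Comp)
  next
    case False
    have "eval (Pair (decode d) (Pair Left Right)) x (prod_encode (0, x))"
      using eval_Pair[OF d eval_id_prog, of x] False by simp
    then show ?thesis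
      unfolding H_def using False by (auto intro: eval_Comp eval_Prec0 eval_const_prog)
  qed
  then have "phi (encode H) x = Some (if x \<in> L then f (the (phi x x)) else c)" for x
    by (simp add: phi_eq_Some_iff decode_encode)
  then show ?thesis by blast
qed

theorem mainTheorem9:
  fixes SafeInstance :: "nat set"
  assumes "\<exists>a b. a \<in> SafeInstance \<and> b \<in> SafeInstance \<and> a \<noteq> b"
  shows "\<not> (\<exists>L. captures L (\<lambda>g. \<forall>x. halts g x \<and> the (phi g x) \<in> SafeInstance))"
proof
  let ?\<psi> = "\<lambda>g. \<forall>x. halts g x \<and> the (phi g x) \<in> SafeInstance"
  assume "\<exists>L. captures L ?\<psi>"
  then obtain L where "decidable L" and sound: "\<forall>g\<in>L. ?\<psi> g"
    and complete: "\<forall>g'. ?\<psi> g' \<longrightarrow> (\<exists>g\<in>L. phi g = phi g')"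
    unfolding captures_def by blast
  obtain a b where ab: "a \<in> SafeInstance" "b \<in> SafeInstance" "a \<noteq> b"
    using assms by blast
  let ?swap = "\<lambda>v. if v = a then b else a"
  have "computable ?swap" by (intro computable_intros)
  moreover have "halts g g" if "g \<in> L" for g using sound that by blast
  ultimately obtain h where h: "\<And>x. phi h x = Some (if x \<in> L then ?swap (the (phi x x)) else a)"
    using diagonal_program[OF \<open>decidable L\<close>, of ?swap a] by blast
  have "?\<psi> h" using ab by (simp add: h halts_def)
  then obtain g where "g \<in> L" and "phi g = phi h" using complete by blast
  then have "phi g g = Some (?swap (the (phi g g)))" using h[of g] by metis
  moreover have "phi g g \<noteq> None" using sound \<open>g \<in> L\<close> by (simp add: halts_def)
  ultimately show False using ab(3) by (auto split: if_splits)
qed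

end
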